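(* For every integer $d \geq 1$ there exist a strictly increasing sequence $(a_n)_{n\geq1}$ of positive integers and a constant $c > 0$ such that $$\frac{a_{n+1}}{a_n} > 1 + \frac{c}{a_n^{1/d}} \qquad \text{for all } n \in \mathbb{N},$$ and such that for almost all $\alpha \in \mathbb{R}$ the discrepancy $D_N$ of $(\{a_n\alpha\})_{n\geq1}$ satisfies $N D_N = O\big((\log N)^{2+\varepsilon}\big)$ as $N\to\infty$, for every $\varepsilon > 0$.
   Context: For real $x$, $\{x\}$ denotes the fractional part of $x$. For a sequence $(x_n)_{n\ge1}$ in $[0,1)$, its discrepancy is $$D_N = \sup_{0 \leq a < b \leq 1} \left| \frac{A_N([a,b))}{N} - (b-a) \right|, \qquad A_N([a,b)) = \#\{1 \leq n \leq N : x_n \in [a,b)\}.$$ *)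

theory Defs
  imports "HOL-Analysis.Analysis" "HOL-Library.Landau_Symbols"
begin

definition discrepancy :: "(nat \<Rightarrow> real) \<Rightarrow> nat \<Rightarrow> real" where
  "discrepancy x N =
     (SUP ab \<in> {(a, b). 0 \<le> a \<and> a < b \<and> b \<le> (1::real)}.
        \<bar>real (card {n \<in> {1..N}. x n \<in> {fst ab..<snd ab}}) / real N - (snd ab - fst ab)\<bar>)"

end

theory Submission
  imports Defs "HOL-Real_Asymp.Real_Asymp"
begin

text \<open>
  Put \<open>T j = 2^2^j\<close> and \<open>a n = n * T (j+1)^(d-1)\<close> on the block \<open>T j \<le> n < T (j+1)\<close>.
  Since \<open>T (j+1) > n\<close>, consecutive terms differ by at least \<open>a n / n \<ge> a n^(1 - 1/d)\<close>, which is
  the growth condition. On a block, \<open>frac (a n * \<alpha>)\<close> is the Kronecker sequence \<open>frac (n * \<beta>)\<close>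
  with \<open>\<beta> = T (j+1)^(d-1) * \<alpha>\<close>. If \<open>\<beta>\<close> admits no approximation \<open>\<bar>q \<beta> - p\<bar> < 1 / (K q)\<close>
  with \<open>q \<le> T (j+1)\<close>, then every window of length \<open>L \<le> T (j+1)\<close> has counting error
  \<open>O(K log L)\<close>: a Dirichlet approximant \<open>p/q\<close> with \<open>q \<le> L\<close> leaves fewer than \<open>K\<close> complete
  periods of length \<open>q\<close>, each with error at most 3, and a remainder of at most half the window.
  For \<open>K = 2^j (j+1)^2\<close> the exceptional \<open>\<alpha>\<close> in a unit interval have measure \<open>O(1/j^2)\<close>,
  so by Borel--Cantelli almost every \<open>\<alpha>\<close> is exceptional for finitely many \<open>j\<close> only.
  Summing over the \<open>O(log log N)\<close> blocks below \<open>N\<close> gives \<open>N D_N = O((log N)^2 (log log N)^3)\<close>.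
\<close>


definition counting_error :: "(nat \<Rightarrow> real) \<Rightarrow> nat \<Rightarrow> nat \<Rightarrow> real \<Rightarrow> real \<Rightarrow> real" where
  "counting_error x m L a b = real (card {n \<in> {m<..m+L}. x n \<in> {a..<b}}) - real L * (b - a)"

lemma counting_error_add:
  "counting_error x m (L1 + L2) a b = counting_error x m L1 a b + counting_error x (m + L1) L2 a b"
proof -
  have "{n \<in> {m<..m+(L1+L2)}. x n \<in> {a..<b}} =
        {n \<in> {m<..m+L1}. x n \<in> {a..<b}} \<union> {n \<in> {m+L1<..m+L1+L2}. x n \<in> {a..<b}}"
    by auto
  then have "card {n \<in> {m<..m+(L1+L2)}. x n \<in> {a..<b}} =
             card {n \<in> {m<..m+L1}. x n \<in> {a..<b}} + card {n \<in> {m+L1<..m+L1+L2}. x n \<in> {a..<b}}"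
    by (simp add: card_Un_disjoint disjoint_iff)
  then show ?thesis unfolding counting_error_def by (simp add: algebra_simps)
qed

lemma counting_error_cong:
  "(\<And>n. n \<in> {m<..m+L} \<Longrightarrow> x n = y n) \<Longrightarrow> counting_error x m L a b = counting_error y m L a b"
  unfolding counting_error_def by (metis (mono_tags, lifting) mem_Collect_eq)

lemma abs_counting_error_le_length:
  assumes "0 \<le> b - a" "b - a \<le> 1"
  shows "\<bar>counting_error x m L a b\<bar> \<le> L"
proof -
  have "card {n \<in> {m<..m+L}. x n \<in> {a..<b}} \<le> card {m<..m+L}" by (rule card_mono) auto
  moreover have "0 \<le> real L * (b - a)" "real L * (b - a) \<le> L"
    using assms mult_left_le[of "b - a" "real L"] by auto
  ultimately show ?thesis unfolding counting_error_def by auto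
qed

lemma abs_mult_discrepancy_le:
  assumes N: "N \<ge> 1"
    and bound: "\<And>a b. 0 \<le> a \<Longrightarrow> a < b \<Longrightarrow> b \<le> 1 \<Longrightarrow> \<bar>counting_error x 0 N a b\<bar> \<le> B"
  shows "\<bar>real N * discrepancy x N\<bar> \<le> B"
proof -
  define S where "S = {(a, b). 0 \<le> a \<and> a < b \<and> b \<le> (1::real)}"
  define v where "v ab = \<bar>real (card {n \<in> {1..N}. x n \<in> {fst ab..<snd ab}}) / real N - (snd ab - fst ab)\<bar>"
    for ab
  have disc: "discrepancy x N = (SUP ab\<in>S. v ab)" unfolding discrepancy_def S_def v_def ..
  have v: "v ab = \<bar>counting_error x 0 N (fst ab) (snd ab)\<bar> / N" for ab
  proof -
    have "{n \<in> {1..N}. x n \<in> {fst ab..<snd ab}} = {n \<in> {0<..0+N}. x n \<in> {fst ab..<snd ab}}" by auto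
    then show ?thesis using N unfolding v_def counting_error_def by (simp add: field_simps)
  qed
  have v_le: "v ab \<le> B / N" if "ab \<in> S" for ab
    using that bound N unfolding v S_def by (auto intro: divide_right_mono)
  have "(0, 1) \<in> S" unfolding S_def by simp
  then have "0 \<le> discrepancy x N" "discrepancy x N \<le> B / N"
    unfolding disc using v_le by (auto intro!: cSUP_upper2 cSUP_least bdd_aboveI2 simp: v_def)
  then show ?thesis using N by (simp add: field_simps)
qed

section \<open>Kronecker sequences\<close>

lemma card_between_ceiling_intervals:
  fixes A :: "int set" and X Y :: real
  assumes lower: "{\<lceil>X + 1\<rceil>..<\<lceil>Y - 1\<rceil>} \<subseteq> A" and upper: "A \<subseteq> {\<lceil>X - 1\<rceil>..<\<lceil>Y + 1\<rceil>}"
    and "X \<le> Y"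
  shows "\<bar>real (card A) - (Y - X)\<bar> \<le> 3"
proof -
  have "finite A" using upper finite_subset by blast
  then have "card {\<lceil>X + 1\<rceil>..<\<lceil>Y - 1\<rceil>} \<le> card A" "card A \<le> card {\<lceil>X - 1\<rceil>..<\<lceil>Y + 1\<rceil>}"
    using card_mono[OF _ lower] card_mono[OF _ upper] by auto
  moreover have "Y - X - 3 \<le> real (nat (\<lceil>Y - 1\<rceil> - \<lceil>X + 1\<rceil>))"
    "real (nat (\<lceil>Y + 1\<rceil> - \<lceil>X - 1\<rceil>)) \<le> Y - X + 3"
    using ceiling_correct[of "Y - 1"] ceiling_correct[of "X + 1"]
      ceiling_correct[of "Y + 1"] ceiling_correct[of "X - 1"] \<open>X \<le> Y\<close> by linarith+
  ultimately show ?thesis by simp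
qed

lemma inj_on_coprime_mult_window:
  fixes p :: int and g :: "nat \<Rightarrow> int"
  assumes "coprime p (int q)"
  shows "inj_on (\<lambda>n. int n * p + g n * int q) {m<..m+q}"
proof (rule inj_onI)
  fix n n' assume n: "n \<in> {m<..m+q}" and n': "n' \<in> {m<..m+q}"
    and "int n * p + g n * int q = int n' * p + g n' * int q"
  then have "(int n - int n') * p = (g n' - g n) * int q" by (simp add: algebra_simps)
  then have "int q dvd (int n - int n')"
    using assms by (metis coprime_commute coprime_dvd_mult_left_iff dvd_triv_right)
  moreover have "\<bar>int n - int n'\<bar> < int q" using n n' by auto
  ultimately show "n = n'"
    using dvd_imp_le_int[of "int n - int n'" "int q"] by (cases "n = n'") auto
qed

lemma coprime_mult_hits_residue_in_window:
  fixes p v :: int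
  assumes "q > 0" "coprime p (int q)"
  obtains n where "n \<in> {m<..m+q}" "int q dvd int n * p - v"
proof -
  obtain x y where xy: "x * p + y * int q = 1"
    using assms(2) by (metis bezout_int coprime_imp_gcd_eq_1)
  define r where "r = (v * x - int (m + 1)) mod int q"
  have r: "0 \<le> r" "r < int q" using assms(1) unfolding r_def by auto
  have "(int (m + 1) + r) - v * x = - ((v * x - int (m + 1)) - (v * x - int (m + 1)) mod int q)"
    unfolding r_def by simp
  then have "int q dvd (int (m + 1) + r) - v * x"
    by (simp only: dvd_minus_iff dvd_minus_mod)
  moreover have "(int (m + 1) + r) * p - v = (int (m + 1) + r - v * x) * p - v * y * int q"
  proof -
    have "(int (m + 1) + r - v * x) * p - v * y * int q = (int (m + 1) + r) * p - v * (x * p + y * int q)"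
      by (simp add: algebra_simps)
    then show ?thesis using xy by simp
  qed
  ultimately have "int q dvd (int (m + 1) + r) * p - v" by simp
  moreover have "int (m + 1 + nat r) = int (m + 1) + r" using r by simp
  ultimately show ?thesis using r by (intro that[of "m + 1 + nat r"]) (auto simp: add.assoc)
qed

lemma abs_counting_error_frac_mult_period_le:
  fixes p :: int and q m :: nat
  assumes q: "q > 0" and cop: "coprime p (int q)" and appr: "\<bar>real q * \<beta> - p\<bar> \<le> 1 / q"
    and ab: "0 \<le> a" "a \<le> b" "b \<le> 1"
  shows "\<bar>counting_error (\<lambda>n. frac (real n * \<beta>)) m q a b\<bar> \<le> 3"
proof -
  define W where "W = {m<..m+q}"
  define \<delta> where "\<delta> = \<beta> - p / q"
  define c where "c = real q * real (m + 1) * \<delta>"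
  \<comment> \<open>\<open>q \<cdot> frac (n \<beta>) = u n + q n \<delta>\<close>: on the window \<open>u\<close> hits every residue class mod \<open>q\<close> once,
      and the drift \<open>q n \<delta>\<close> stays within 1 of \<open>c\<close>.\<close>
  define u where "u n = int n * p + (- \<lfloor>real n * \<beta>\<rfloor>) * int q" for n
  define S where "S = {n \<in> W. frac (real n * \<beta>) \<in> {a..<b}}"
  have qr: "real q > 0" using q by simp
  have q\<delta>: "real q * \<delta> = real q * \<beta> - p" unfolding \<delta>_def using qr by (simp add: field_simps)
  have frac_eq: "real q * frac (real n * \<beta>) = u n + real q * real n * \<delta>" for n
    unfolding frac_def u_def \<delta>_def using qr by (simp add: field_simps)
  have drift: "\<bar>real q * real n * \<delta> - c\<bar> \<le> 1" if "n \<in> W" for n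
  proof -
    have "\<bar>real q * real n * \<delta> - c\<bar> = \<bar>real n - real (m + 1)\<bar> * \<bar>real q * \<delta>\<bar>"
      unfolding c_def by (simp add: abs_mult[symmetric] algebra_simps)
    also have "\<dots> \<le> real q * (1 / real q)"
      using that appr q\<delta> unfolding W_def by (intro mult_mono) auto
    finally show ?thesis using qr by simp
  qed
  have "inj_on u W" unfolding u_def W_def by (rule inj_on_coprime_mult_window[OF cop])
  then have card_S: "card S = card (u ` S)" by (simp add: card_image inj_on_subset S_def)
  have upper: "u ` S \<subseteq> {\<lceil>q * a - c - 1\<rceil>..<\<lceil>q * b - c + 1\<rceil>}"
  proof safe
    fix n assume "n \<in> S"
    then have "a \<le> frac (real n * \<beta>)" "frac (real n * \<beta>) < b" "n \<in> W" unfolding S_def by auto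
    then have "q * a \<le> u n + real q * real n * \<delta>" "u n + real q * real n * \<delta> < q * b"
      using frac_eq[of n] qr by (metis mult_left_mono less_imp_le, metis mult_strict_left_mono)
    then show "u n \<in> {\<lceil>q * a - c - 1\<rceil>..<\<lceil>q * b - c + 1\<rceil>}"
      using drift[OF \<open>n \<in> W\<close>] by (simp add: ceiling_le_iff less_ceiling_iff abs_le_iff) linarith
  qed
  have lower: "{\<lceil>q * a - c + 1\<rceil>..<\<lceil>q * b - c - 1\<rceil>} \<subseteq> u ` S"
  proof
    fix v assume "v \<in> {\<lceil>q * a - c + 1\<rceil>..<\<lceil>q * b - c - 1\<rceil>}"
    then have v: "q * a - c + 1 \<le> v" "v < q * b - c - 1"
      by (simp_all only: atLeastLessThan_iff ceiling_le_iff less_ceiling_iff)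
    obtain n where n: "n \<in> W" "int q dvd int n * p - v"
      using coprime_mult_hits_residue_in_window[OF q cop] unfolding W_def by blast
    then obtain k where k: "int n * p - v = int q * k" by (elim dvdE)
    have "real q * (real n * \<beta> - k) = v + real q * real n * \<delta>"
    proof -
      have "(real n * p - v) * real q = real q * k * real q"
        using arg_cong[OF k, of real_of_int] by simp
      then show ?thesis unfolding \<delta>_def using qr by (simp add: field_simps)
    qed
    then have "q * a \<le> real q * (real n * \<beta> - k)" "real q * (real n * \<beta> - k) < q * b"
      using v drift[OF n(1)] by (auto simp: abs_le_iff)
    then have in_ab: "a \<le> real n * \<beta> - k" "real n * \<beta> - k < b" using qr by simp_all
    then have fl: "\<lfloor>real n * \<beta>\<rfloor> = k" using ab by (intro floor_unique) auto
    then have "n \<in> S" using in_ab n(1) unfolding S_def frac_def by simp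
    moreover have "u n = v" unfolding u_def fl using k by (simp add: algebra_simps)
    ultimately show "v \<in> u ` S" by force
  qed
  have "\<bar>real (card (u ` S)) - ((q * b - c) - (q * a - c))\<bar> \<le> 3"
    using ab qr by (intro card_between_ceiling_intervals[OF lower upper]) simp
  then have "\<bar>real (card S) - real q * (b - a)\<bar> \<le> 3" unfolding card_S by (simp add: algebra_simps)
  then show ?thesis unfolding counting_error_def S_def W_def by simp
qed

lemma abs_counting_error_frac_mult_periods_le:
  fixes p :: int and q :: nat
  assumes "q > 0" "coprime p (int q)" "\<bar>real q * \<beta> - p\<bar> \<le> 1 / q" "0 \<le> a" "a \<le> b" "b \<le> 1"
  shows "\<bar>counting_error (\<lambda>n. frac (real n * \<beta>)) m (t * q) a b\<bar> \<le> 3 * real t"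
proof (induction t arbitrary: m)
  case 0
  then show ?case by (simp add: counting_error_def)
next
  case (Suc t)
  have "counting_error (\<lambda>n. frac (real n * \<beta>)) m (Suc t * q) a b =
        counting_error (\<lambda>n. frac (real n * \<beta>)) m q a b +
        counting_error (\<lambda>n. frac (real n * \<beta>)) (m + q) (t * q) a b"
    by (simp add: counting_error_add[symmetric])
  then show ?case
    using abs_counting_error_frac_mult_period_le[OF assms, of m] Suc.IH[of "m + q"] by simp
qed

definition badly_approx_upto :: "nat \<Rightarrow> real \<Rightarrow> real \<Rightarrow> bool" where
  "badly_approx_upto M K \<beta> \<longleftrightarrow> (\<forall>q\<in>{1..M}. \<forall>p::int. 1 / (K * real q) \<le> \<bar>real q * \<beta> - p\<bar>)"

lemma double_mod_le_dividend: "0 < q \<Longrightarrow> q \<le> L \<Longrightarrow> 2 * (L mod q) \<le> (L :: nat)"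
proof -
  assume "0 < q" "q \<le> L"
  then have "0 < L div q" by (simp add: div_greater_zero_iff)
  then have "q \<le> q * (L div q)" by simp
  then show ?thesis using mult_div_mod_eq[of q L] mod_less_divisor[OF \<open>0 < q\<close>, of L] by linarith
qed

text \<open>A Dirichlet approximation \<open>p/q\<close> of \<open>\<beta>\<close> with \<open>q \<le> L\<close> has \<open>L < K q\<close>, so the window
  splits into fewer than \<open>K\<close> full periods and a remainder of at most half its length.\<close>

lemma counting_error_frac_mult_reduce:
  assumes bad: "badly_approx_upto M K \<beta>" and K: "K > 0" and ab: "0 \<le> a" "a \<le> b" "b \<le> 1"
    and L: "1 \<le> L" "L \<le> M"
  obtains r where "r < L" "2 * r \<le> L"
    "\<bar>counting_error (\<lambda>n. frac (real n * \<beta>)) m L a b\<bar>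
       \<le> 3 * K + \<bar>counting_error (\<lambda>n. frac (real n * \<beta>)) (m + (L - r)) r a b\<bar>"
proof -
  have "0 < L" using L by simp
  then obtain p k where pk: "coprime p k" "0 < k" "k \<le> int L" "\<bar>of_int k * \<beta> - of_int p\<bar> < 1 / L"
    by (rule Dirichlet_approx_coprime)
  define q where "q = nat k"
  have q: "0 < q" "q \<le> L" "coprime p (int q)" "\<bar>real q * \<beta> - p\<bar> < 1 / L"
    using pk unfolding q_def by auto
  have "q \<in> {1..M}" using q L by auto
  then have "1 / (K * real q) \<le> \<bar>real q * \<beta> - p\<bar>" using bad unfolding badly_approx_upto_def by blast
  then have "1 / (K * real q) < 1 / L" using q(4) by linarith
  moreover have "0 < K * real q" using K q by simp
  ultimately have "real L < K * q" using L by (simp add: field_simps)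
  moreover have "real (L div q) * q \<le> real L"
    by (metis div_times_less_eq_dividend of_nat_le_iff of_nat_mult)
  ultimately have "real (L div q) * q < K * q" by linarith
  then have t: "real (L div q) < K" using q mult_less_cancel_right_pos[of "real q"] by simp
  have "1 / real L \<le> 1 / real q" using q by (simp add: frac_le)
  then have appr: "\<bar>real q * \<beta> - p\<bar> \<le> 1 / q" using q(4) by linarith
  define e where "e = counting_error (\<lambda>n. frac (real n * \<beta>))"
  have "\<bar>e m (L div q * q) a b\<bar> \<le> 3 * K"
    using abs_counting_error_frac_mult_periods_le[OF q(1,3) appr ab, where m=m and t="L div q"] t
    unfolding e_def by linarith
  moreover have "e m L a b = e m (L div q * q) a b + e (m + (L - L mod q)) (L mod q) a b"
    using counting_error_add[of _ m "L div q * q" "L mod q"] unfolding e_def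
    by (simp add: minus_mod_eq_div_mult)
  ultimately have "\<bar>e m L a b\<bar> \<le> 3 * K + \<bar>e (m + (L - L mod q)) (L mod q) a b\<bar>"
    using abs_triangle_ineq[of "e m (L div q * q) a b"] by linarith
  moreover have "L mod q < L" using q mod_less_divisor[of q L] by linarith
  ultimately show ?thesis using double_mod_le_dividend[OF q(1,2)] that[of "L mod q"] unfolding e_def by blast
qed

lemma abs_counting_error_frac_mult_le_log:
  assumes bad: "badly_approx_upto M K \<beta>" and K: "K > 0" and ab: "0 \<le> a" "a \<le> b" "b \<le> 1"
  shows "1 \<le> L \<Longrightarrow> L \<le> M \<Longrightarrow>
    \<bar>counting_error (\<lambda>n. frac (real n * \<beta>)) m L a b\<bar> \<le> 3 * K * (log 2 L + 1)"
proof (induction L arbitrary: m rule: less_induct)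
  case (less L)
  obtain r where r: "r < L" "2 * r \<le> L" and split:
    "\<bar>counting_error (\<lambda>n. frac (real n * \<beta>)) m L a b\<bar>
       \<le> 3 * K + \<bar>counting_error (\<lambda>n. frac (real n * \<beta>)) (m + (L - r)) r a b\<bar>"
    using counting_error_frac_mult_reduce[OF bad K ab less.prems] by blast
  have "\<bar>counting_error (\<lambda>n. frac (real n * \<beta>)) (m + (L - r)) r a b\<bar> \<le> 3 * K * log 2 L"
  proof (cases "r = 0")
    case True
    then show ?thesis using K less.prems by (simp add: counting_error_def)
  next
    case False
    have "log 2 r + 1 = log 2 (2 * r)" using False by (simp add: log_mult)
    also have "\<dots> \<le> log 2 L" using False r by simp
    finally have "3 * K * (log 2 r + 1) \<le> 3 * K * log 2 L" using K by simp
    moreover have "\<bar>counting_error (\<lambda>n. frac (real n * \<beta>)) (m + (L - r)) r a b\<bar> \<le> 3 * K * (log 2 r + 1)"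
      using less.IH[of r] r False less.prems by simp
    ultimately show ?thesis by linarith
  qed
  then show ?case using split by (simp add: algebra_simps)
qed

section \<open>Badly approximable dilates\<close>

lemma not_badly_approx_near_fraction:
  fixes R M :: nat and K \<alpha> :: real and m :: int
  assumes R: "R \<ge> 1" and K: "K \<ge> 1" and \<alpha>: "m \<le> \<alpha>" "\<alpha> \<le> m + 1"
    and "\<not> badly_approx_upto M K (real R * \<alpha>)"
  obtains q p where "q \<in> {1..M}" "p \<in> {int (q * R) * m .. int (q * R) * m + int (q * R)}"
    "\<alpha> \<in> {(p - 1 / (K * q)) / real (q * R) <..< (p + 1 / (K * q)) / real (q * R)}"
proof -
  obtain q and p :: int where q: "q \<in> {1..M}" and p: "\<bar>real q * (real R * \<alpha>) - p\<bar> < 1 / (K * q)"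
    using assms(5) unfolding badly_approx_upto_def by (auto simp: not_le)
  define Q where "Q = int (q * R)"
  have "1 * 1 \<le> q * R" using q R by (intro mult_le_mono) auto
  then have Q: "1 \<le> real_of_int Q" unfolding Q_def by (metis mult_1 of_int_of_nat_eq of_nat_1 of_nat_le_iff)
  have "1 * 1 \<le> K * q" using K q by (intro mult_mono) auto
  then have "1 / (K * q) \<le> 1" by simp
  moreover have p': "\<bar>Q * \<alpha> - p\<bar> < 1 / (K * q)" using p unfolding Q_def by (simp add: mult.assoc)
  moreover have "Q * m \<le> Q * \<alpha>" "Q * \<alpha> \<le> Q * (m + 1)" using \<alpha> Q by (simp_all add: mult_left_mono)
  ultimately have "real_of_int (Q * m - 1) < p" "p < real_of_int (Q * m + Q + 1)"
    by (auto simp: abs_less_iff algebra_simps)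
  then have "p \<in> {Q * m .. Q * m + Q}" unfolding of_int_less_iff by simp
  moreover have "(p - 1 / (K * q)) / Q < \<alpha>" "\<alpha> < (p + 1 / (K * q)) / Q"
    using p' Q by (auto simp: abs_less_iff pos_divide_less_eq pos_less_divide_eq mult.commute)
  ultimately show ?thesis using q that unfolding Q_def by simp
qed

lemma emeasure_UN_short_intervals_le:
  fixes Q :: nat and m :: int and \<eta> :: real
  assumes Q: "1 \<le> Q" and \<eta>: "0 \<le> \<eta>"
  shows "emeasure lborel (\<Union>p\<in>{Q * m .. Q * m + Q}. {(p - \<eta>) / Q <..< (p + \<eta>) / Q}) \<le> ennreal (4 * \<eta>)"
proof -
  have len: "emeasure lborel {(p - \<eta>) / Q <..< (p + \<eta>) / Q} = ennreal (2 * \<eta> / Q)" for p :: int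
  proof -
    have "(p - \<eta>) / Q \<le> (p + \<eta>) / Q" using Q \<eta> by (intro divide_right_mono) auto
    moreover have "(p + \<eta>) / Q - (p - \<eta>) / Q = 2 * \<eta> / Q" by (simp add: diff_divide_distrib[symmetric])
    ultimately show ?thesis by simp
  qed
  have sum: "(\<Sum>p\<in>{Q * m .. Q * m + Q}. 2 * \<eta> / Q) \<le> 4 * \<eta>"
  proof -
    have "(\<Sum>p\<in>{Q * m .. Q * m + Q}. 2 * \<eta> / Q) = 2 * \<eta> * ((Q + 1) / Q)" by (simp add: field_simps)
    also have "\<dots> \<le> 2 * \<eta> * 2" using Q \<eta> by (intro mult_left_mono) (auto simp: divide_le_eq)
    finally show ?thesis by simp
  qed
  have "emeasure lborel (\<Union>p\<in>{Q * m .. Q * m + Q}. {(p - \<eta>) / Q <..< (p + \<eta>) / Q})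
      \<le> (\<Sum>p\<in>{Q * m .. Q * m + Q}. emeasure lborel {(p - \<eta>) / Q <..< (p + \<eta>) / Q})"
    by (intro emeasure_subadditive_finite) auto
  also have "\<dots> = (\<Sum>p\<in>{Q * m .. Q * m + Q}. ennreal (2 * \<eta> / Q))"
    by (simp only: len)
  also have "\<dots> = ennreal (\<Sum>p\<in>{Q * m .. Q * m + Q}. 2 * \<eta> / Q)"
    using \<eta> by (intro sum_ennreal) auto
  also have "\<dots> \<le> ennreal (4 * \<eta>)" using sum by (rule ennreal_leI)
  finally show ?thesis .
qed

lemma emeasure_not_badly_approx_le:
  fixes R M :: nat and K :: real and m :: int
  assumes R: "R \<ge> 1" and K: "K \<ge> 1"
  shows "emeasure lborel {\<alpha> \<in> {real_of_int m..real_of_int m + 1}. \<not> badly_approx_upto M K (real R * \<alpha>)}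
           \<le> ennreal (4 * harm M / K)"
proof -
  define U where "U q = (\<Union>p\<in>{int (q * R) * m .. int (q * R) * m + int (q * R)}.
    {(p - 1 / (K * q)) / real (q * R) <..< (p + 1 / (K * q)) / real (q * R)})" for q
  have "{\<alpha> \<in> {real_of_int m..real_of_int m + 1}. \<not> badly_approx_upto M K (real R * \<alpha>)}
          \<subseteq> (\<Union>q\<in>{1..M}. U q)"
  proof
    fix \<alpha> :: real
    assume "\<alpha> \<in> {\<alpha> \<in> {real_of_int m..real_of_int m + 1}. \<not> badly_approx_upto M K (real R * \<alpha>)}"
    then have "m \<le> \<alpha>" "\<alpha> \<le> m + 1" "\<not> badly_approx_upto M K (real R * \<alpha>)" by auto
    then obtain q p where "q \<in> {1..M}" "p \<in> {int (q * R) * m .. int (q * R) * m + int (q * R)}"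
      "\<alpha> \<in> {(p - 1 / (K * q)) / real (q * R) <..< (p + 1 / (K * q)) / real (q * R)}"
      by (rule not_badly_approx_near_fraction[OF R K])
    then show "\<alpha> \<in> (\<Union>q\<in>{1..M}. U q)" unfolding U_def by blast
  qed
  then have "emeasure lborel {\<alpha> \<in> {real_of_int m..real_of_int m + 1}. \<not> badly_approx_upto M K (real R * \<alpha>)}
      \<le> emeasure lborel (\<Union>q\<in>{1..M}. U q)"
    by (intro emeasure_mono) (auto simp: U_def)
  also have "\<dots> \<le> (\<Sum>q\<in>{1..M}. emeasure lborel (U q))"
    by (intro emeasure_subadditive_finite) (auto simp: U_def)
  also have "\<dots> \<le> (\<Sum>q\<in>{1..M}. ennreal (4 * (1 / (K * q))))"
  proof (intro sum_mono)
    fix q assume "q \<in> {1..M}"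
    then have "1 \<le> q * R" using R by (simp add: Suc_le_eq)
    then show "emeasure lborel (U q) \<le> ennreal (4 * (1 / (K * q)))"
      unfolding U_def using K by (intro emeasure_UN_short_intervals_le) auto
  qed
  also have "\<dots> = ennreal (4 * harm M / K)"
    using K by (subst sum_ennreal) (auto simp: harm_def sum_divide_distrib sum_distrib_left field_simps)
  finally show ?thesis .
qed

lemma AE_eventually_badly_approx:
  fixes R M :: "nat \<Rightarrow> nat" and K :: "nat \<Rightarrow> real"
  assumes R: "\<And>i. R i \<ge> 1" and K: "\<And>i. K i \<ge> 1" and summable: "summable (\<lambda>i. harm (M i) / K i)"
  shows "AE \<alpha> in lborel. eventually (\<lambda>i. badly_approx_upto (M i) (K i) (real (R i) * \<alpha>)) sequentially"
proof -
  have "AE \<alpha> in lborel. \<alpha> \<in> {real_of_int m..real_of_int m + 1} \<longrightarrow>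
          eventually (\<lambda>i. badly_approx_upto (M i) (K i) (real (R i) * \<alpha>)) sequentially" for m :: int
  proof -
    define A where
      "A i = {\<alpha> \<in> {real_of_int m..real_of_int m + 1}. \<not> badly_approx_upto (M i) (K i) (real (R i) * \<alpha>)}"
      for i
    have meas: "A i \<in> sets lborel" for i
      unfolding A_def badly_approx_upto_def by measurable
    have le: "emeasure lborel (A i) \<le> ennreal (4 * harm (M i) / K i)" for i
      unfolding A_def by (rule emeasure_not_badly_approx_le[OF R K])
    have "measure lborel (A i) \<le> 4 * harm (M i) / K i" for i
      using le[of i] K[of i] by (simp add: measure_def enn2real_leI harm_nonneg)
    then have "summable (\<lambda>i. measure lborel (A i))"
      by (intro summable_comparison_test'[OF summable_mult[OF summable, of 4]]) auto
    moreover have "emeasure lborel (A i) < \<infinity>" for i by (rule le_less_trans[OF le]) simp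
    ultimately have "AE \<alpha> in lborel. eventually (\<lambda>i. \<alpha> \<in> space lborel - A i) sequentially"
      by (intro borel_cantelli_AE1 meas)
    then show ?thesis by eventually_elim (auto simp: A_def elim!: eventually_mono)
  qed
  then have "AE \<alpha> in lborel. \<forall>m::int. \<alpha> \<in> {real_of_int m..real_of_int m + 1} \<longrightarrow>
               eventually (\<lambda>i. badly_approx_upto (M i) (K i) (real (R i) * \<alpha>)) sequentially"
    by (subst AE_all_countable) auto
  then show ?thesis by eventually_elim (metis atLeastAtMost_iff of_int_floor_le real_of_int_floor_add_one_ge)
qed

section \<open>The sequence\<close>

definition tower :: "nat \<Rightarrow> nat" where
  "tower j = 2 ^ 2 ^ j"

definition tower_level :: "nat \<Rightarrow> nat" where
  "tower_level n = (LEAST j. n < tower j)"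

definition sparse_seq :: "nat \<Rightarrow> nat \<Rightarrow> nat" where
  "sparse_seq d n = n * tower (tower_level n) ^ (d - 1)"

lemma two_le_tower: "2 \<le> tower j"
  unfolding tower_def using power_increasing[of 1 "2 ^ j" "2::nat"] by simp

lemma tower_mono: "j \<le> k \<Longrightarrow> tower j \<le> tower k"
  unfolding tower_def by (intro power_increasing) auto

lemma less_tower_tower_level: "n < tower (tower_level n)"
proof -
  have "(2::nat) ^ n \<le> 2 ^ 2 ^ n" using less_exp[of n] by (intro power_increasing) auto
  then have "n < tower n" unfolding tower_def using less_exp[of n] by linarith
  then show ?thesis unfolding tower_level_def by (rule LeastI)
qed

lemma tower_level_le: "n < tower j \<Longrightarrow> tower_level n \<le> j"
  unfolding tower_level_def by (rule Least_le)

lemma tower_level_mono: "n \<le> n' \<Longrightarrow> tower_level n \<le> tower_level n'"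
  using less_tower_tower_level[of n'] by (intro tower_level_le) simp

lemma tower_le_if_tower_level_Suc: "tower_level n = Suc j \<Longrightarrow> tower j \<le> n"
  using tower_level_le[of n j] by fastforce

lemma tower_level_eq_Suc: "tower j \<le> n \<Longrightarrow> n < tower (Suc j) \<Longrightarrow> tower_level n = Suc j"
  using tower_level_le[of n "Suc j"] tower_mono[of "tower_level n" j] less_tower_tower_level[of n]
  by (cases "tower_level n \<le> j") auto

lemma power_le_sparse_seq:
  assumes "d \<ge> 1"
  shows "real n ^ d \<le> real (sparse_seq d n)"
proof -
  have "real n ^ d = real n * real n ^ (d - 1)" using assms by (simp add: power_eq_if)
  also have "\<dots> \<le> real n * real (tower (tower_level n)) ^ (d - 1)"
    using less_tower_tower_level[of n] by (intro mult_left_mono power_mono) auto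
  finally show ?thesis unfolding sparse_seq_def by simp
qed

lemma sparse_seq_gap: "sparse_seq d n + tower (tower_level n) ^ (d - 1) \<le> sparse_seq d (Suc n)"
proof -
  have le: "tower (tower_level n) ^ (d - 1) \<le> tower (tower_level (Suc n)) ^ (d - 1)"
    by (intro power_mono tower_mono tower_level_mono) auto
  show ?thesis unfolding sparse_seq_def using add_mono[OF mult_le_mono2[OF le, of n] le] by (simp add: add.commute)
qed

lemma sparse_seq_pos: "n \<ge> 1 \<Longrightarrow> 0 < sparse_seq d n"
  unfolding sparse_seq_def using two_le_tower[of "tower_level n"] by simp

lemma sparse_seq_less_Suc: "sparse_seq d n < sparse_seq d (Suc n)"
  using sparse_seq_gap[of d n] zero_less_power[of "tower (tower_level n)" "d - 1"]
    two_le_tower[of "tower_level n"] by linarith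

lemma sparse_seq_ratio_gt:
  assumes d: "d \<ge> 1" and n: "n \<ge> 1"
  shows "real (sparse_seq d (Suc n)) / real (sparse_seq d n)
           > 1 + (1 / 2) / real (sparse_seq d n) powr (1 / real d)"
proof -
  define g where "g = tower (tower_level n) ^ (d - 1)"
  have "1 \<le> tower (tower_level n)" using two_le_tower[of "tower_level n"] by simp
  then have g: "g \<ge> 1" unfolding g_def by (rule one_le_power)
  have a: "real (sparse_seq d n) = real n * g" unfolding sparse_seq_def g_def by simp
  then have pos: "real (sparse_seq d n) > 0" using g n by simp
  have "1 + 1 / real n = (real (sparse_seq d n) + g) / real (sparse_seq d n)"
    using a g n by (simp add: field_simps)
  also have "\<dots> \<le> real (sparse_seq d (Suc n)) / real (sparse_seq d n)"
    using sparse_seq_gap[of d n] pos unfolding g_def by (intro divide_right_mono) linarith+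
  finally have ratio: "1 + 1 / real n \<le> real (sparse_seq d (Suc n)) / real (sparse_seq d n)" .
  have "(real n / 2) ^ d < real n ^ d"
    using n d by (intro power_strict_mono) auto
  then have "(real n / 2) ^ d < real (sparse_seq d n)" using power_le_sparse_seq[OF d, of n] by linarith
  then have "((real n / 2) ^ d) powr (1 / real d) < real (sparse_seq d n) powr (1 / real d)"
    using d by (intro powr_less_mono2) auto
  moreover have "((real n / 2) ^ d) powr (1 / real d) = real n / 2"
    using n d by (simp add: powr_realpow[symmetric] powr_powr)
  ultimately have "(1 / 2) / real (sparse_seq d n) powr (1 / real d) < (1 / 2) / (real n / 2)"
    using n pos by (intro divide_strict_left_mono) auto
  then show ?thesis using ratio by simp
qed

section \<open>Discrepancy of the sequence\<close>

text \<open>These weights make \<open>\<Sum>j. harm (tower j) / approx_const j\<close> converge while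
  \<open>\<Sum>i\<le>j. approx_const i = O(j^3 2^j)\<close>.\<close>
definition approx_const :: "nat \<Rightarrow> real" where
  "approx_const i = 2 ^ i * (real i + 1) ^ 2"

definition badly_approx_from :: "nat \<Rightarrow> nat \<Rightarrow> real \<Rightarrow> bool" where
  "badly_approx_from d I \<alpha> \<longleftrightarrow>
     (\<forall>i\<ge>I. badly_approx_upto (tower i) (approx_const i) (real (tower i ^ (d - 1)) * \<alpha>))"

lemma frac_sparse_seq_eq:
  "tower_level n = j \<Longrightarrow>
     frac (real (sparse_seq d n) * \<alpha>) = frac (real n * (real (tower j ^ (d - 1)) * \<alpha>))"
  unfolding sparse_seq_def by (simp add: mult.assoc)

lemma abs_counting_error_sparse_seq_level_le:
  assumes bad: "badly_approx_from d I \<alpha>"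
    and ab: "0 \<le> a" "a \<le> b" "b \<le> 1"
    and window: "1 \<le> L" "tower j \<le> m + 1" "m + L < tower (Suc j)"
  shows "\<bar>counting_error (\<lambda>n. frac (real (sparse_seq d n) * \<alpha>)) m L a b\<bar>
           \<le> (if Suc j < I then real (tower (Suc j)) else 0) + 3 * approx_const (Suc j) * (log 2 L + 1)"
proof -
  have nonneg: "0 \<le> 3 * approx_const (Suc j) * (log 2 L + 1)"
    using window by (simp add: approx_const_def)
  show ?thesis
  proof (cases "Suc j < I")
    case True
    have "\<bar>counting_error (\<lambda>n. frac (real (sparse_seq d n) * \<alpha>)) m L a b\<bar> \<le> L"
      using ab by (intro abs_counting_error_le_length) auto
    moreover have "real L \<le> real (tower (Suc j))" using window by simp
    ultimately show ?thesis using True nonneg by simp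
  next
    case False
    let ?\<beta> = "real (tower (Suc j) ^ (d - 1)) * \<alpha>"
    have "counting_error (\<lambda>n. frac (real (sparse_seq d n) * \<alpha>)) m L a b =
          counting_error (\<lambda>n. frac (real n * ?\<beta>)) m L a b"
      using window by (intro counting_error_cong frac_sparse_seq_eq tower_level_eq_Suc) auto
    also have "\<bar>\<dots>\<bar> \<le> 3 * approx_const (Suc j) * (log 2 L + 1)"
    proof (rule abs_counting_error_frac_mult_le_log[OF _ _ ab])
      show "badly_approx_upto (tower (Suc j)) (approx_const (Suc j)) ?\<beta>"
        using bad False unfolding badly_approx_from_def by simp
    qed (use window in \<open>auto simp: approx_const_def\<close>)
    finally show ?thesis using False by simp
  qed
qed

lemma abs_counting_error_sparse_seq_le:
  assumes bad: "badly_approx_from d I \<alpha>"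
    and ab: "0 \<le> a" "a \<le> b" "b \<le> 1"
  shows "1 \<le> N \<Longrightarrow> N < tower j \<Longrightarrow>
    \<bar>counting_error (\<lambda>n. frac (real (sparse_seq d n) * \<alpha>)) 0 N a b\<bar>
      \<le> (\<Sum>i\<le>j. (if i < I then real (tower i) else 0) + 3 * approx_const i * (log 2 N + 1))"
proof (induction j arbitrary: N)
  case 0
  then have "N = 1" unfolding tower_def by simp
  moreover have "\<bar>counting_error (\<lambda>n. frac (real (sparse_seq d n) * \<alpha>)) 0 N a b\<bar> \<le> N"
    using ab by (intro abs_counting_error_le_length) auto
  ultimately show ?case unfolding atMost_0 by (simp add: approx_const_def)
next
  case (Suc j)
  let ?e = "counting_error (\<lambda>n. frac (real (sparse_seq d n) * \<alpha>)) 0"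
  let ?f = "\<lambda>N i. (if i < I then real (tower i) else 0) + 3 * approx_const i * (log 2 (real N) + 1)"
  have f_mono: "?f N' i \<le> ?f N i" if "1 \<le> N'" "N' \<le> N" for N' i
    using that by (auto simp: approx_const_def intro!: mult_left_mono)
  have f_nonneg: "0 \<le> ?f N i" for i
    using Suc.prems by (simp add: approx_const_def)
  show ?case
  proof (cases "N < tower j")
    case True
    then show ?thesis using Suc.IH[OF Suc.prems(1)] f_nonneg[of "Suc j"] by simp
  next
    case False
    define N0 where "N0 = tower j - 1"
    have N0: "1 \<le> N0" "N0 < tower j" "N0 < N" using two_le_tower[of j] False unfolding N0_def by auto
    have "?e N a b = ?e N0 a b + counting_error (\<lambda>n. frac (real (sparse_seq d n) * \<alpha>)) N0 (N - N0) a b"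
      using counting_error_add[of _ 0 N0 "N - N0"] N0 by simp
    moreover have "\<bar>?e N0 a b\<bar> \<le> (\<Sum>i\<le>j. ?f N i)"
      using Suc.IH[OF N0(1,2)] sum_mono[of "{..j}" "?f N0" "?f N"] f_mono[OF N0(1)] N0 by force
    moreover have "\<bar>counting_error (\<lambda>n. frac (real (sparse_seq d n) * \<alpha>)) N0 (N - N0) a b\<bar>
                   \<le> ?f (N - N0) (Suc j)"
      using N0 Suc.prems unfolding N0_def
      by (intro abs_counting_error_sparse_seq_level_le[OF bad ab]) auto
    moreover have "?f (N - N0) (Suc j) \<le> ?f N (Suc j)" using N0 by (intro f_mono) auto
    ultimately show ?thesis by simp
  qed
qed

lemma sum_approx_const_le: "(\<Sum>i\<le>j. approx_const i) \<le> (real j + 1) ^ 3 * 2 ^ j"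
proof -
  have "(\<Sum>i\<le>j. approx_const i) \<le> (\<Sum>i\<le>j. approx_const j)"
    unfolding approx_const_def by (intro sum_mono mult_mono power_increasing power_mono) auto
  also have "\<dots> = (real j + 1) ^ 3 * 2 ^ j" by (simp add: approx_const_def power3_eq_cube power2_eq_square)
  finally show ?thesis .
qed

lemma tower_level_log_bounds:
  assumes "2 \<le> N"
  shows "2 ^ tower_level N \<le> 2 * log 2 N" "real (tower_level N) + 1 \<le> log 2 (log 2 N) + 2"
proof -
  obtain j where j: "tower_level N = Suc j"
    using assms less_tower_tower_level[of N] by (cases "tower_level N") (auto simp: tower_def)
  have "2 ^ j = log 2 (real (tower j))" unfolding tower_def by simp
  also have "\<dots> \<le> log 2 N" using tower_le_if_tower_level_Suc[OF j] two_le_tower[of j] by simp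
  finally have le: "2 ^ j \<le> log 2 N" .
  then show "2 ^ tower_level N \<le> 2 * log 2 N" unfolding j by simp
  have "real j = log 2 (2 ^ j)" by simp
  also have "\<dots> \<le> log 2 (log 2 N)"
    using le order_trans[OF one_le_power[of "2::real" j] le] by (intro log_le_cancel_iff[THEN iffD2]) auto
  finally show "real (tower_level N) + 1 \<le> log 2 (log 2 N) + 2" unfolding j by simp
qed

lemma sum_level_bounds_le:
  assumes N: "2 \<le> N"
  shows "(\<Sum>i\<le>tower_level N. (if i < I then real (tower i) else 0) + 3 * approx_const i * (log 2 N + 1))
    \<le> (\<Sum>i<I. real (tower i)) + 6 * (log 2 (log 2 N) + 2) ^ 3 * log 2 N * (log 2 N + 1)"
proof -
  define j where "j = tower_level N"
  have log: "1 \<le> log 2 N" using N by simp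
  have "(\<Sum>i\<le>j. if i < I then real (tower i) else 0) = (\<Sum>i\<in>{..j} \<inter> {..<I}. real (tower i))"
    by (simp add: sum.inter_restrict)
  also have "\<dots> \<le> (\<Sum>i<I. real (tower i))" by (rule sum_mono2) auto
  finally have small: "(\<Sum>i\<le>j. if i < I then real (tower i) else 0) \<le> (\<Sum>i<I. real (tower i))" .
  have "(real j + 1) ^ 3 * 2 ^ j \<le> (log 2 (log 2 N) + 2) ^ 3 * (2 * log 2 N)"
    using tower_level_log_bounds[OF N] log unfolding j_def by (intro mult_mono power_mono) auto
  then have "(\<Sum>i\<le>j. approx_const i) \<le> (log 2 (log 2 N) + 2) ^ 3 * (2 * log 2 N)"
    using sum_approx_const_le[of j] by linarith
  then have "3 * (\<Sum>i\<le>j. approx_const i) * (log 2 N + 1)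
      \<le> 3 * ((log 2 (log 2 N) + 2) ^ 3 * (2 * log 2 N)) * (log 2 N + 1)"
    using log by (intro mult_right_mono mult_left_mono) auto
  then have "(\<Sum>i\<le>j. 3 * approx_const i * (log 2 N + 1))
      \<le> 6 * (log 2 (log 2 N) + 2) ^ 3 * log 2 N * (log 2 N + 1)"
    by (simp add: sum_distrib_left sum_distrib_right mult_ac)
  with small show ?thesis unfolding j_def[symmetric] by (simp add: sum.distrib)
qed

lemma harm_tower_le: "harm (tower i) \<le> (2 * 2 ^ i :: real)"
proof -
  have "harm (tower i) - ln (real (tower i)) \<le> harm 1 - ln (real (1::nat))"
    using two_le_tower[of i] by (intro euler_mascheroni_sequence_decreasing) auto
  then have "harm (tower i) \<le> ln (real (tower i)) + 1" by (simp add: harm_def)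
  moreover have "ln (real (tower i)) = 2 ^ i * ln 2" unfolding tower_def by (simp add: ln_realpow)
  moreover have "2 ^ i * ln 2 \<le> (2 ^ i :: real)" using ln_2_less_1 by simp
  moreover have "(1::real) \<le> 2 ^ i" by simp
  ultimately show ?thesis by linarith
qed

lemma summable_harm_tower_div_approx_const: "summable (\<lambda>i. harm (tower i) / approx_const i)"
proof (rule summable_comparison_test')
  have "summable (\<lambda>i. inverse (real i ^ 2))" by (rule inverse_power_summable) simp
  then have "summable (\<lambda>i. inverse (real (Suc i) ^ 2))" by (subst summable_Suc_iff)
  then show "summable (\<lambda>i. 2 * inverse (real (Suc i) ^ 2))" by (rule summable_mult)
  fix i
  have "harm (tower i) / approx_const i \<le> 2 * 2 ^ i / approx_const i"
    using harm_tower_le[of i] by (intro divide_right_mono) (auto simp: approx_const_def)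
  then show "norm (harm (tower i) / approx_const i) \<le> 2 * inverse (real (Suc i) ^ 2)"
    by (simp add: approx_const_def harm_nonneg field_simps)
qed

lemma AE_badly_approx_from: "AE \<alpha> in lborel. \<exists>I. badly_approx_from d I \<alpha>"
proof -
  have "AE \<alpha> in lborel. eventually
          (\<lambda>i. badly_approx_upto (tower i) (approx_const i) (real (tower i ^ (d - 1)) * \<alpha>)) sequentially"
  proof (rule AE_eventually_badly_approx[OF _ _ summable_harm_tower_div_approx_const])
    show "1 \<le> tower i ^ (d - 1)" for i using two_le_tower[of i] by (intro one_le_power) simp
    show "1 \<le> approx_const i" for i
      unfolding approx_const_def using mult_mono[of 1 "2 ^ i" 1 "(real i + 1) ^ 2"] by simp
  qed
  then show ?thesis by (simp add: eventually_sequentially badly_approx_from_def)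
qed

lemma sparse_seq_discrepancy_le:
  assumes bad: "badly_approx_from d I \<alpha>"
    and N: "2 \<le> N"
  shows "\<bar>real N * discrepancy (\<lambda>n. frac (real (sparse_seq d n) * \<alpha>)) N\<bar>
    \<le> (\<Sum>i<I. real (tower i)) + 6 * (log 2 (log 2 N) + 2) ^ 3 * log 2 N * (log 2 N + 1)"
proof (rule abs_mult_discrepancy_le)
  fix a b :: real assume "0 \<le> a" "a < b" "b \<le> 1"
  then show "\<bar>counting_error (\<lambda>n. frac (real (sparse_seq d n) * \<alpha>)) 0 N a b\<bar>
    \<le> (\<Sum>i<I. real (tower i)) + 6 * (log 2 (log 2 N) + 2) ^ 3 * log 2 N * (log 2 N + 1)"
    using abs_counting_error_sparse_seq_le[OF bad, of a b N "tower_level N"] N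
      less_tower_tower_level[of N] sum_level_bounds_le[OF N, of I] by simp
qed (use N in simp)

lemma log_discrepancy_bound_bigo:
  fixes C \<epsilon> :: real
  assumes "\<epsilon> > 0"
  shows "(\<lambda>N::nat. C + 6 * (log 2 (log 2 N) + 2) ^ 3 * log 2 N * (log 2 N + 1))
           \<in> O(\<lambda>N. ln N powr (2 + \<epsilon>))"
  using assms by real_asymp

lemma sparse_seq_discrepancy_bigo:
  assumes bad: "badly_approx_from d I \<alpha>" and "\<epsilon> > 0"
  shows "(\<lambda>N. real N * discrepancy (\<lambda>n. frac (real (sparse_seq d n) * \<alpha>)) N)
           \<in> O(\<lambda>N. ln (real N) powr (2 + \<epsilon>))"
proof -
  let ?D = "\<lambda>N. real N * discrepancy (\<lambda>n. frac (real (sparse_seq d n) * \<alpha>)) N"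
  let ?H = "\<lambda>N. (\<Sum>i<I. real (tower i)) + 6 * (log 2 (log 2 N) + 2) ^ 3 * log 2 N * (log 2 N + 1)"
  have "?D \<in> O(?H)"
  proof (rule bigoI[where c = 1])
    show "eventually (\<lambda>N. norm (?D N) \<le> 1 * norm (?H N)) at_top"
      using eventually_ge_at_top[of 2]
    proof eventually_elim
      case (elim N)
      then show ?case using order_trans[OF sparse_seq_discrepancy_le[OF bad elim] abs_ge_self] by simp
    qed
  qed
  then show ?thesis using landau_o.big_trans log_discrepancy_bound_bigo[OF \<open>\<epsilon> > 0\<close>] by blast
qed

theorem theorem5:
  fixes d :: nat
  assumes "d \<ge> 1"
  shows "\<exists>(a :: nat \<Rightarrow> nat) (c :: real).
           (\<forall>n\<ge>1. 0 < a n \<and> a n < a (Suc n)) \<and> c > 0 \<and>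
           (\<forall>n\<ge>1. real (a (Suc n)) / real (a n) > 1 + c / (real (a n) powr (1 / real d))) \<and>
           (AE \<alpha> in lborel. \<forall>\<epsilon>>0.
              (\<lambda>N. real N * discrepancy (\<lambda>n. frac (real (a n) * \<alpha>)) N)
                \<in> O(\<lambda>N. ln (real N) powr (2 + \<epsilon>)))"
proof (intro exI[of _ "sparse_seq d"] exI[of _ "1 / 2"] conjI)
  show "\<forall>n\<ge>1. 0 < sparse_seq d n \<and> sparse_seq d n < sparse_seq d (Suc n)"
    using sparse_seq_pos sparse_seq_less_Suc by auto
  show "\<forall>n\<ge>1. real (sparse_seq d (Suc n)) / real (sparse_seq d n)
          > 1 + (1 / 2) / real (sparse_seq d n) powr (1 / real d)"
    using sparse_seq_ratio_gt[OF assms] by auto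
  show "AE \<alpha> in lborel. \<forall>\<epsilon>>0. (\<lambda>N. real N * discrepancy (\<lambda>n. frac (real (sparse_seq d n) * \<alpha>)) N)
          \<in> O(\<lambda>N. ln (real N) powr (2 + \<epsilon>))"
    using AE_badly_approx_from[of d] by eventually_elim (auto intro: sparse_seq_discrepancy_bigo)
qed simp

end
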